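(* Let $\mathcal{C}$ be a covering of a finite set $E$ satisfying the condition (EQU): for every $K\in\mathcal{C}$ and all $x,y\in K$, the number of blocks of $\mathcal{C}$ containing $x$ equals the number of blocks of $\mathcal{C}$ containing $y$. Then $\{N(x):x\in E\}$ forms a partition of $E$, where $N(x)=\bigcap\{K\in\mathcal{C}:x\in K\}$.
   Context: A covering of $E$ is a family of nonempty subsets (blocks) of $E$ with union $E$. "$\{N(x):x\in E\}$ forms a partition" means the distinct sets among the $N(x)$ are pairwise disjoint (their union is $E$ since $x\in N(x)$). *)

theory Defs
  imports Main "HOL-Library.Disjoint_Sets"
begin

definition covering :: "'a set \<Rightarrow> 'a set set \<Rightarrow> bool" where
  "covering E C \<longleftrightarrow> (\<forall>K\<in>C. K \<noteq> {} \<and> K \<subseteq> E) \<and> \<Union>C = E"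

definition deg :: "'a set set \<Rightarrow> 'a \<Rightarrow> nat" where
  "deg C x = card {K \<in> C. x \<in> K}"

definition EQU :: "'a set set \<Rightarrow> bool" where
  "EQU C \<longleftrightarrow> (\<forall>K\<in>C. \<forall>x\<in>K. \<forall>y\<in>K. deg C x = deg C y)"

definition Nb :: "'a set set \<Rightarrow> 'a \<Rightarrow> 'a set" where
  "Nb C x = \<Inter>{K \<in> C. x \<in> K}"

end

theory Submission
  imports Defs
begin

text \<open>Every z \<in> N(x) lies in all blocks containing x, so the blocks through x form a subset
  of the blocks through z. Since x lies in some block K, which then also contains z, (EQU)
  says both families have the same finite cardinality, hence they coincide and N(z) = N(x).
  So N(x) and N(y) sharing a point z forces N(x) = N(z) = N(y).\<close>

lemma finite_blocks_if_covering:
  assumes "finite E" and "covering E C"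
  shows "finite C"
proof (rule finite_subset)
  show "C \<subseteq> Pow E" using assms(2) by (auto simp: covering_def)
  show "finite (Pow E)" using assms(1) by simp
qed

lemma mem_Nb_iff: "z \<in> Nb C x \<longleftrightarrow> {K \<in> C. x \<in> K} \<subseteq> {K \<in> C. z \<in> K}"
  by (auto simp: Nb_def)

lemma self_mem_Nb: "x \<in> Nb C x"
  by (simp add: mem_Nb_iff)

lemma Nb_subset_block: "K \<in> C \<Longrightarrow> x \<in> K \<Longrightarrow> Nb C x \<subseteq> K"
  by (auto simp: Nb_def)

lemma blocks_through_eq_if_mem_Nb:
  assumes "finite C" and "EQU C" and "x \<in> \<Union>C" and "z \<in> Nb C x"
  shows "{K \<in> C. x \<in> K} = {K \<in> C. z \<in> K}"
proof -
  obtain K where K: "K \<in> C" "x \<in> K" using assms(3) by blast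
  have sub: "{K \<in> C. x \<in> K} \<subseteq> {K \<in> C. z \<in> K}" using assms(4) by (simp add: mem_Nb_iff)
  with K have "z \<in> K" by blast
  with K assms(2) have "deg C x = deg C z" unfolding EQU_def by blast
  then have "card {K \<in> C. x \<in> K} = card {K \<in> C. z \<in> K}" by (simp add: deg_def)
  with sub assms(1) show ?thesis by (simp add: card_subset_eq)
qed

lemma Nb_eq_if_mem_Nb:
  assumes "finite C" and "EQU C" and "x \<in> \<Union>C" and "z \<in> Nb C x"
  shows "Nb C z = Nb C x"
  using blocks_through_eq_if_mem_Nb[OF assms] by (simp add: Nb_def)

theorem proposition21:
  fixes E :: "'a set" and C :: "'a set set"
  assumes "finite E" and "covering E C" and "EQU C"
  shows "partition_on E (Nb C ` E)"
proof -
  have finC: "finite C" using finite_blocks_if_covering[OF assms(1,2)] .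
  have E_eq: "\<Union>C = E" and blocks_in_E: "\<And>K. K \<in> C \<Longrightarrow> K \<subseteq> E"
    using assms(2) by (auto simp: covering_def)
  have x_in_Nb: "x \<in> Nb C x" for x by (rule self_mem_Nb)
  have Nb_in_E: "Nb C x \<subseteq> E" if "x \<in> E" for x
    using that E_eq blocks_in_E Nb_subset_block[of _ C x] by blast
  have overlap_eq: "Nb C x = Nb C y"
    if "x \<in> E" "y \<in> E" "z \<in> Nb C x" "z \<in> Nb C y" for x y z
    using Nb_eq_if_mem_Nb[OF finC assms(3)] that E_eq by metis
  have "\<Union>(Nb C ` E) = E" using Nb_in_E x_in_Nb by blast
  moreover have "{} \<notin> Nb C ` E" using x_in_Nb by blast
  moreover have "disjoint (Nb C ` E)"
  proof (rule disjointI)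
    fix A B assume "A \<in> Nb C ` E" "B \<in> Nb C ` E" "A \<noteq> B"
    then obtain x y where "x \<in> E" "y \<in> E" "A = Nb C x" "B = Nb C y" "A \<noteq> B" by blast
    then show "A \<inter> B = {}" using overlap_eq by blast
  qed
  ultimately show ?thesis by (simp add: partition_on_def)
qed

end
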